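(* Let $n\geqslant 2$ and let $\alpha\in\mathcal{PMI}_n\setminus\mathcal{POI}_n$ have rank $n-1$. Then: (1) if $n\equiv 0$ or $n\equiv 3 \pmod 4$, then $\alpha\in\mathcal{AM}_n$ if and only if $\mathrm{d}(\alpha)$ and $\mathrm{i}(\alpha)$ have distinct parities; (2) if $n\equiv 1$ or $n\equiv 2\pmod 4$, then $\alpha\in\mathcal{AM}_n$ if and only if $\mathrm{d}(\alpha)$ and $\mathrm{i}(\alpha)$ have the same parity.
   Context: Let $\Omega_n=\{1<2<\cdots<n\}$ and $\mathcal{I}_n$ the monoid of all partial injective maps of $\Omega_n$; the rank of $\alpha$ is $|\mathrm{Im}(\alpha)|$. $\mathcal{AI}_n$ is the set of all $\alpha\in\mathcal{I}_n$ with $\alpha=\sigma|_{\mathrm{Dom}(\alpha)}$ for some even permutation $\sigma$ of $\Omega_n$. $\mathcal{POI}_n$ is the set of order-preserving elements of $\mathcal{I}_n$; $\mathcal{PMI}_n$ is the set of monotone elements (order-preserving or order-reversing, where order-reversing means $x\leqslant y$ implies $x\alpha\geqslant y\alpha$ on the domain). $\mathcal{AM}_n=\mathcal{AI}_n\cap\mathcal{PMI}_n$. For $\alpha$ of rank $n-1$, $\mathrm{d}(\alpha)$ is the unique element of $\Omega_n\setminus\mathrm{Dom}(\alpha)$ and $\mathrm{i}(\alpha)$ is the unique element of $\Omega_n\setminus\mathrm{Im}(\alpha)$. *)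

theory Defs
  imports "HOL-Combinatorics.Permutations"
begin

definition Omega :: "nat \<Rightarrow> nat set" where
  "Omega n = {1..n}"

definition PI :: "nat \<Rightarrow> (nat \<rightharpoonup> nat) set" where
  "PI n = {a. dom a \<subseteq> Omega n \<and> ran a \<subseteq> Omega n \<and> inj_on a (dom a)}"

definition rank :: "(nat \<rightharpoonup> nat) \<Rightarrow> nat" where
  "rank a = card (ran a)"

definition AI :: "nat \<Rightarrow> (nat \<rightharpoonup> nat) set" where
  "AI n = {a \<in> PI n. \<exists>\<sigma>. \<sigma> permutes Omega n \<and> evenperm \<sigma> \<and>
                         (\<forall>x\<in>dom a. a x = Some (\<sigma> x))}"

definition order_preserving :: "(nat \<rightharpoonup> nat) \<Rightarrow> bool" where
  "order_preserving a \<longleftrightarrow> (\<forall>x\<in>dom a. \<forall>y\<in>dom a. x \<le> y \<longrightarrow> the (a x) \<le> the (a y))"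

definition order_reversing :: "(nat \<rightharpoonup> nat) \<Rightarrow> bool" where
  "order_reversing a \<longleftrightarrow> (\<forall>x\<in>dom a. \<forall>y\<in>dom a. x \<le> y \<longrightarrow> the (a x) \<ge> the (a y))"

definition POI :: "nat \<Rightarrow> (nat \<rightharpoonup> nat) set" where
  "POI n = {a \<in> PI n. order_preserving a}"

definition PMI :: "nat \<Rightarrow> (nat \<rightharpoonup> nat) set" where
  "PMI n = {a \<in> PI n. order_preserving a \<or> order_reversing a}"

definition AM :: "nat \<Rightarrow> (nat \<rightharpoonup> nat) set" where
  "AM n = AI n \<inter> PMI n"

text \<open>For rank n-1: the unique missing element of the domain / image.\<close>
definition dpt :: "nat \<Rightarrow> (nat \<rightharpoonup> nat) \<Rightarrow> nat" where
  "dpt n a = (THE x. x \<in> Omega n - dom a)"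

definition ipt :: "nat \<Rightarrow> (nat \<rightharpoonup> nat) \<Rightarrow> nat" where
  "ipt n a = (THE x. x \<in> Omega n - ran a)"

end

theory Submission
  imports Defs
begin

(* A partial injection a of rank n - 1 extends to exactly one permutation of Omega_n, namely the
   one sending the missing domain point d to the missing image point i; so a is in AI_n iff this
   extension is even. If a is order-reversing, the extension is the reversal x |-> n + 1 - x
   composed with the cycle that moves d to n + 1 - i and shifts the points in between by one.
   The reversal is a product of n div 2 transpositions and the cycle of |d - (n + 1 - i)|
   adjacent transpositions, so the extension is even iff n div 2 + d + n + 1 + i is even,
   and the parity of n div 2 + n depends only on n mod 4. *)

lemma ran_eq_image_dom: "ran m = (\<lambda>x. the (m x)) ` dom m"
  by (force simp: ran_def dom_def)

lemma card_dom_eq_card_ran: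
  assumes "inj_on m (dom m)" shows "card (dom m) = card (ran m)"
proof -
  have "inj_on (\<lambda>x. the (m x)) (dom m)"
    using assms by (auto simp: inj_on_def dom_def)
  then show ?thesis by (simp add: ran_eq_image_dom card_image)
qed

lemma Diff_eq_singleton_THE:
  assumes "finite S" "X \<subseteq> S" "card X + 1 = card S"
  shows "S - X = {THE x. x \<in> S - X}"
proof -
  have "card (S - X) = 1"
    using assms by (simp add: card_Diff_subset finite_subset)
  then obtain x where "S - X = {x}" by (rule card_1_singletonE)
  then show ?thesis by simp
qed

lemma PI_rank_pred_missing_points:
  assumes "a \<in> PI n" "rank a = n - 1" "n \<ge> 1"
  shows "Omega n - dom a = {dpt n a}" "Omega n - ran a = {ipt n a}"
proof -
  have sub: "dom a \<subseteq> Omega n" "ran a \<subseteq> Omega n" and inj: "inj_on a (dom a)"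
    using assms(1) by (auto simp: PI_def)
  have fin: "finite (Omega n)" by (simp add: Omega_def)
  have "card (dom a) + 1 = card (Omega n)" "card (ran a) + 1 = card (Omega n)"
    using assms(2,3) card_dom_eq_card_ran[OF inj] by (auto simp: rank_def Omega_def)
  then show "Omega n - dom a = {dpt n a}" "Omega n - ran a = {ipt n a}"
    unfolding dpt_def ipt_def using fin sub by (metis Diff_eq_singleton_THE)+
qed

lemma strict_mono_on_le_of_image_subset:
  fixes f g :: "'a::wellorder \<Rightarrow> 'b::linorder"
  assumes "strict_mono_on A f" "strict_mono_on A g" "f ` A \<subseteq> g ` A" "x \<in> A"
  shows "g x \<le> f x"
  using assms(4)
proof (induction x rule: less_induct)
  case (less x)
  show ?case
  proof (rule ccontr)
    assume "\<not> g x \<le> f x"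
    moreover obtain y where y: "y \<in> A" "f x = g y"
      using assms(3) less.prems by blast
    ultimately have "y < x"
      using assms(2) less.prems by (metis not_le_imp_less strict_mono_on_less)
    then have "f y < f x" using assms(1) y(1) less.prems by (simp add: strict_mono_onD)
    moreover have "g y \<le> f y" using less.IH \<open>y < x\<close> y(1) .
    ultimately show False using y(2) by simp
  qed
qed

lemma strict_mono_on_eq_of_image_eq:
  fixes f g :: "'a::wellorder \<Rightarrow> 'b::linorder"
  assumes "strict_mono_on A f" "strict_mono_on A g" "f ` A = g ` A" "x \<in> A"
  shows "f x = g x"
  using strict_mono_on_le_of_image_subset[of A f g x] strict_mono_on_le_of_image_subset[of A g f x]
    assms by auto

lemma evenperm_transpose_comp:
  "a \<noteq> b \<Longrightarrow> permutation p \<Longrightarrow> evenperm (transpose a b \<circ> p) \<longleftrightarrow> \<not> evenperm p"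
  by (simp add: evenperm_comp evenperm_swap permutation_swap_id)

lemma evenperm_comp_transpose:
  "a \<noteq> b \<Longrightarrow> permutation p \<Longrightarrow> evenperm (p \<circ> transpose a b) \<longleftrightarrow> \<not> evenperm p"
  by (simp add: evenperm_comp evenperm_swap permutation_swap_id)

text \<open>The cycle \<open>(d d+1 \<dots> j)\<close> if \<open>d \<le> j\<close> and \<open>(d d-1 \<dots> j)\<close> otherwise: the increasing
  bijection of \<open>-{d}\<close> onto \<open>-{j}\<close>, extended by \<open>d \<mapsto> j\<close>.\<close>

definition slide :: "nat \<Rightarrow> nat \<Rightarrow> nat \<Rightarrow> nat" where
  "slide d j x = (if x = d then j else if d < x \<and> x \<le> j then x - 1
     else if j \<le> x \<and> x < d then x + 1 else x)"

lemma slide_self: "slide d d = id"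
  by (auto simp: fun_eq_iff slide_def)

lemma slide_Suc_right: "d \<le> j \<Longrightarrow> slide d (Suc j) = transpose j (Suc j) \<circ> slide d j"
  by (auto simp: fun_eq_iff slide_def transpose_def)

lemma slide_Suc_left: "j \<le> d \<Longrightarrow> slide (Suc d) j = slide d j \<circ> transpose d (Suc d)"
  by (auto simp: fun_eq_iff slide_def transpose_def)

lemma slide_permutes:
  assumes "d \<in> {m..n}" "j \<in> {m..n}"
  shows "slide d j permutes {m..n}"
proof (cases "d \<le> j")
  case True
  then show ?thesis using assms(2)
  proof (induction j rule: dec_induct)
    case base show ?case unfolding slide_self by (rule permutes_id)
  next
    case (step k)
    show ?case unfolding slide_Suc_right[OF step(1)]
      using step assms(1) by (intro permutes_compose permutes_swap_id) auto
  qed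
next
  case False
  then have "j \<le> d" by simp
  then show ?thesis using assms(1)
  proof (induction d rule: dec_induct)
    case base show ?case unfolding slide_self by (rule permutes_id)
  next
    case (step k)
    show ?case unfolding slide_Suc_left[OF step(1)]
      using step assms(2) by (intro permutes_compose permutes_swap_id) auto
  qed
qed

lemma permutation_slide: "permutation (slide d j)"
  using slide_permutes[of d "min d j" "max d j" j] by (auto simp: permutation_permutes)

lemma evenperm_slide: "evenperm (slide d j) \<longleftrightarrow> even (d + j)"
proof (cases "d \<le> j")
  case True
  then show ?thesis
  proof (induction j rule: dec_induct)
    case (step k)
    have flip: "evenperm (transpose k (Suc k) \<circ> slide d k) \<longleftrightarrow> \<not> evenperm (slide d k)"
      by (simp add: evenperm_transpose_comp permutation_slide)
    show ?case unfolding slide_Suc_right[OF step(1)] flip step(3) by simp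
  qed (simp add: slide_self)
next
  case False
  then have "j \<le> d" by simp
  then show ?thesis
  proof (induction d rule: dec_induct)
    case (step k)
    have flip: "evenperm (slide k j \<circ> transpose k (Suc k)) \<longleftrightarrow> \<not> evenperm (slide k j)"
      by (simp add: evenperm_comp_transpose permutation_slide)
    show ?case unfolding slide_Suc_left[OF step(1)] flip step(3) by simp
  qed (simp add: slide_self)
qed

lemma strict_mono_on_slide: "d \<notin> A \<Longrightarrow> strict_mono_on A (slide d j)"
  by (rule strict_mono_onI) (auto simp: slide_def)

lemma slide_image_Diff:
  assumes "d \<in> {m..n}" "j \<in> {m..n}"
  shows "slide d j ` ({m..n} - {d}) = {m..n} - {j}"
proof -
  have "inj (slide d j)" using slide_permutes[OF assms] by (rule permutes_inj)
  moreover have "slide d j d = j" by (simp add: slide_def)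
  ultimately show ?thesis
    using permutes_image[OF slide_permutes[OF assms]] by (simp add: image_set_diff)
qed

definition reflect :: "nat \<Rightarrow> nat \<Rightarrow> nat \<Rightarrow> nat" where
  "reflect a b x = (if a \<le> x \<and> x \<le> b then a + b - x else x)"

lemma reflect_reflect: "reflect a b (reflect a b x) = x"
  by (auto simp: reflect_def)

lemma reflect_permutes: "reflect a b permutes {a..b}"
  by (rule bij_imp_permutes, rule bij_betw_byWitness[where f' = "reflect a b"])
     (auto simp: reflect_def)

lemma reflect_eq_transpose_comp: "a < b \<Longrightarrow> reflect a b = transpose a b \<circ> reflect (Suc a) (b - 1)"
  by (auto simp: fun_eq_iff reflect_def transpose_def)

lemma evenperm_reflect: "evenperm (reflect a b) \<longleftrightarrow> even ((b + 1 - a) div 2)"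
proof (induction "b - a" arbitrary: a b rule: less_induct)
  case less
  show ?case
  proof (cases "a < b")
    case True
    have "permutation (reflect (Suc a) (b - 1))"
      using reflect_permutes by (auto simp: permutation_permutes)
    moreover have "even ((b + 1 - a) div 2) \<longleftrightarrow> odd ((b - 1 + 1 - Suc a) div 2)"
      using True by presburger
    ultimately show ?thesis
      using less[of "b - 1" "Suc a"] True by (simp add: reflect_eq_transpose_comp evenperm_transpose_comp)
  next
    case False
    then have "reflect a b = id" by (auto simp: fun_eq_iff reflect_def)
    then show ?thesis using False by simp
  qed
qed

lemma reflect_image_Diff:
  assumes "i \<in> {a..b}"
  shows "reflect a b ` ({a..b} - {i}) = {a..b} - {a + b - i}"
proof -
  have "inj (reflect a b)" using reflect_permutes by (rule permutes_inj)
  moreover have "reflect a b i = a + b - i" using assms by (simp add: reflect_def)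
  ultimately show ?thesis
    using permutes_image[OF reflect_permutes] by (simp add: image_set_diff)
qed

lemma reflect_strict_antimono:
  "x \<in> {a..b} \<Longrightarrow> y \<in> {a..b} \<Longrightarrow> x < y \<Longrightarrow> reflect a b y < reflect a b x"
  by (auto simp: reflect_def)

lemma evenperm_reflect_comp_slide:
  "evenperm (reflect a b \<circ> slide d j) \<longleftrightarrow> (even ((b + 1 - a) div 2) \<longleftrightarrow> even (d + j))"
proof -
  have "permutation (reflect a b)"
    using reflect_permutes permutation_permutes by blast
  then have "evenperm (reflect a b \<circ> slide d j) \<longleftrightarrow> evenperm (reflect a b) = evenperm (slide d j)"
    using permutation_slide by (rule evenperm_comp)
  then show ?thesis by (simp add: evenperm_reflect evenperm_slide)
qed

lemma permutes_eq_if_agree_on_all_but_one: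
  assumes "\<sigma> permutes S" "\<tau> permutes S" "S - A \<subseteq> {d}" "\<forall>x\<in>A. \<sigma> x = \<tau> x"
  shows "\<sigma> = \<tau>"
proof
  fix x
  show "\<sigma> x = \<tau> x"
  proof (cases "x \<in> S - A")
    case False
    then show ?thesis using assms(1,2,4) by (auto simp: permutes_not_in)
  next
    case True
    then obtain y where y: "y \<in> S" "\<sigma> x = \<tau> y"
      using permutes_image[OF assms(2)] permutes_in_image[OF assms(1)] by blast
    have "y \<notin> A"
    proof
      assume "y \<in> A"
      then have "\<sigma> x = \<sigma> y" using y(2) assms(4) by simp
      then have "x = y" using permutes_inj[OF assms(1)] by (simp add: inj_eq)
      then show False using True \<open>y \<in> A\<close> by simp
    qed
    then have "y = x" using y(1) True assms(3) by auto
    then show ?thesis using y(2) by simp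
  qed
qed

lemma AI_iff_evenperm_extension:
  assumes "a \<in> PI n" "Omega n - dom a \<subseteq> {d}"
    and "\<sigma> permutes Omega n" "\<forall>x\<in>dom a. a x = Some (\<sigma> x)"
  shows "a \<in> AI n \<longleftrightarrow> evenperm \<sigma>"
proof
  assume "a \<in> AI n"
  then obtain \<tau> where \<tau>: "\<tau> permutes Omega n" "evenperm \<tau>" "\<forall>x\<in>dom a. a x = Some (\<tau> x)"
    by (auto simp: AI_def)
  have "\<tau> = \<sigma>"
    using permutes_eq_if_agree_on_all_but_one[OF \<tau>(1) assms(3,2)] \<tau>(3) assms(4) by simp
  then show "evenperm \<sigma>" using \<tau>(2) by simp
next
  assume "evenperm \<sigma>"
  then show "a \<in> AI n" using assms(1,3,4) by (auto simp: AI_def)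
qed

lemma order_reversing_eq_reflect_slide:
  assumes "a \<in> PI n" "order_reversing a" "Omega n - dom a = {d}" "Omega n - ran a = {i}"
    and "x \<in> dom a"
  shows "a x = Some (reflect 1 n (slide d (n + 1 - i) x))"
proof -
  define j where "j = n + 1 - i"
  have sub: "dom a \<subseteq> {1..n}" "ran a \<subseteq> {1..n}" and inj: "inj_on a (dom a)"
    using assms(1) by (auto simp: PI_def Omega_def)
  then have dom: "dom a = {1..n} - {d}" and ran: "ran a = {1..n} - {i}"
    and d: "d \<in> {1..n}" and i: "i \<in> {1..n}"
    using assms(3,4) by (auto simp: Omega_def)
  have j: "j \<in> {1..n}" using i by (auto simp: j_def)
  \<comment> \<open>\<open>g\<close> and \<open>slide d j\<close> are both increasing bijections of \<open>dom a\<close> onto \<open>{1..n} - {j}\<close>.\<close>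
  define g where "g y = reflect 1 n (the (a y))" for y
  have "strict_mono_on (dom a) g"
  proof (rule strict_mono_onI)
    fix y z assume yz: "y \<in> dom a" "z \<in> dom a" "y < z"
    then have "a z \<noteq> a y" using inj by (metis inj_on_contraD less_irrefl)
    then have "the (a z) \<noteq> the (a y)" using yz by (auto simp: dom_def)
    moreover have "the (a z) \<le> the (a y)" using assms(2) yz by (simp add: order_reversing_def)
    moreover have "the (a y) \<in> {1..n}" "the (a z) \<in> {1..n}"
      using sub(2) yz by (auto simp: dom_def intro: ranI)
    ultimately show "g y < g z" by (simp add: g_def reflect_strict_antimono)
  qed
  moreover have "strict_mono_on (dom a) (slide d j)" using dom by (simp add: strict_mono_on_slide)
  moreover have "g ` dom a = slide d j ` dom a"
  proof -
    have "g ` dom a = reflect 1 n ` ran a" by (simp add: g_def ran_eq_image_dom image_image)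
    then show ?thesis using ran dom i d j by (simp add: reflect_image_Diff slide_image_Diff j_def)
  qed
  ultimately have "g x = slide d j x" using assms(5) by (rule strict_mono_on_eq_of_image_eq)
  moreover have "the (a x) \<in> {1..n}" using sub(2) assms(5) by (auto simp: dom_def intro: ranI)
  ultimately show ?thesis
    using assms(5) reflect_reflect[of 1 n "the (a x)"] by (auto simp: g_def j_def)
qed

lemma parity_condition_mod_4:
  fixes n d i :: nat
  assumes "i \<le> n"
  shows "(n mod 4 = 0 \<or> n mod 4 = 3 \<longrightarrow>
            ((even (n div 2) \<longleftrightarrow> even (d + (n + 1 - i))) \<longleftrightarrow> even d \<noteq> even i))
       \<and> (n mod 4 = 1 \<or> n mod 4 = 2 \<longrightarrow>
            ((even (n div 2) \<longleftrightarrow> even (d + (n + 1 - i))) \<longleftrightarrow> even d = even i))"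
proof -
  have "even (d + (n + 1 - i)) \<longleftrightarrow> (even d \<longleftrightarrow> even i) = odd n" using assms by auto
  moreover have "even (n div 2) \<longleftrightarrow> n mod 4 = 0 \<or> n mod 4 = 1" by presburger
  moreover have "even n \<longleftrightarrow> n mod 4 = 0 \<or> n mod 4 = 2" by presburger
  ultimately show ?thesis by auto
qed

theorem proposition2p2:
  fixes n :: nat and a :: "nat \<rightharpoonup> nat"
  assumes "n \<ge> 2"
    and "a \<in> PMI n - POI n"
    and "rank a = n - 1"
  shows "(n mod 4 = 0 \<or> n mod 4 = 3 \<longrightarrow>
            (a \<in> AM n \<longleftrightarrow> even (dpt n a) \<noteq> even (ipt n a)))
       \<and> (n mod 4 = 1 \<or> n mod 4 = 2 \<longrightarrow>
            (a \<in> AM n \<longleftrightarrow> even (dpt n a) = even (ipt n a)))"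
proof -
  have PI: "a \<in> PI n" and rev: "order_reversing a" using assms(2) by (auto simp: PMI_def POI_def)
  define d i where "d = dpt n a" and "i = ipt n a"
  have dom: "Omega n - dom a = {d}" and ran: "Omega n - ran a = {i}"
    using PI_rank_pred_missing_points[OF PI assms(3)] assms(1) by (auto simp: d_def i_def)
  then have "d \<in> {1..n}" and i: "i \<in> {1..n}" by (auto simp: Omega_def)
  define \<sigma> where "\<sigma> = reflect 1 n \<circ> slide d (n + 1 - i)"
  have "\<sigma> permutes Omega n"
    unfolding \<sigma>_def Omega_def using \<open>d \<in> {1..n}\<close> i
    by (intro permutes_compose slide_permutes reflect_permutes) auto
  moreover have "\<forall>x\<in>dom a. a x = Some (\<sigma> x)"
    using order_reversing_eq_reflect_slide[OF PI rev dom ran] by (simp add: \<sigma>_def)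
  ultimately have "a \<in> AM n \<longleftrightarrow> evenperm \<sigma>"
    using AI_iff_evenperm_extension[OF PI] dom assms(2) by (auto simp: AM_def)
  also have "\<dots> \<longleftrightarrow> (even (n div 2) \<longleftrightarrow> even (d + (n + 1 - i)))"
    by (simp add: \<sigma>_def evenperm_reflect_comp_slide)
  finally have AM: "a \<in> AM n \<longleftrightarrow> (even (n div 2) \<longleftrightarrow> even (d + (n + 1 - i)))" .
  show ?thesis
    unfolding AM d_def[symmetric] i_def[symmetric] using parity_condition_mod_4 i by simp
qed

end
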